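(* Let $\Gamma$ be a simplicial complex on the vertex set $V_1=\{x_1,\ldots,x_n\}$, and let $\Gamma_1,\ldots,\Gamma_m$ ($m\geq1$) be simplicial subcomplexes of $\Gamma$ with $\Gamma=\bigcup_{j=1}^m\Gamma_j$ (some $\Gamma_j$ may equal $\{\varnothing\}$). Let $y_1,\ldots,y_m$ be new vertices and define \[\widetilde\Gamma=\left\{\sigma\cup\tau:\ \sigma\in\Gamma,\ \tau\subseteq\{y_j:\sigma\in\Gamma_j\}\right\}.\] Then $\widetilde\Gamma$ is contractible.
   Context: Simplicial complexes contain the empty face; $\widetilde\Gamma$ is a simplicial complex on $V_1\cup\{y_1,\ldots,y_m\}$, and contractibility refers to its geometric realization. *)

theory Defs
  imports "HOL-Analysis.Analysis"
begin

definition simplicial_complex :: "'v set \<Rightarrow> 'v set set \<Rightarrow> bool" where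
  "simplicial_complex V K \<longleftrightarrow>
     finite V \<and> (\<forall>\<sigma>\<in>K. \<sigma> \<subseteq> V) \<and> {} \<in> K \<and> (\<forall>\<sigma>\<in>K. \<forall>\<tau>. \<tau> \<subseteq> \<sigma> \<longrightarrow> \<tau> \<in> K)"

definition geom_realization :: "'v set set \<Rightarrow> ('v \<Rightarrow> real) set" where
  "geom_realization K =
     {f. (\<forall>v. 0 \<le> f v) \<and> {v. f v \<noteq> 0} \<in> K \<and> sum f {v. f v \<noteq> 0} = 1}"

definition geom_top :: "'v set set \<Rightarrow> ('v \<Rightarrow> real) topology" where
  "geom_top K = subtopology (powertop_real UNIV) (geom_realization K)"

text \<open>The complex \<Gamma>~ on vertex set V1 \<union> {y_1..y_m}: old vertices x are Inl x,
new vertex y_j is Inr j.\<close>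
definition cone_ext :: "'a set set \<Rightarrow> (nat \<Rightarrow> 'a set set) \<Rightarrow> nat \<Rightarrow> ('a + nat) set set" where
  "cone_ext \<Gamma> \<Gamma>s m =
     {Inl ` \<sigma> \<union> Inr ` \<tau> | \<sigma> \<tau>. \<sigma> \<in> \<Gamma> \<and> \<tau> \<subseteq> {j \<in> {1..m}. \<sigma> \<in> \<Gamma>s j}}"

end

theory Submission
  imports Defs
begin

text \<open>For a point f of the realization, call a nonempty set \<rho> of old vertices a block of f if the
old coordinates of f are positive on \<rho> and strictly larger there than on V1 - \<rho>. The blocks form a
chain, and the gap by which \<rho> is separated depends continuously on f. The map stage k rebuilds f by
placing the gap of each block \<rho> on \<rho> itself when card \<rho> \<le> k and on the new vertices y_j with
\<rho> \<in> \<Gamma>_j otherwise (keeping the y-coordinates of f), and renormalising. The supports of f and of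
stage (card V1) f, and those of stage (k+1) f and stage k f, lie in a common face, so straight-line
homotopies connect the identity to stage (card V1), ..., stage 0. Finally stage 0 lands in the simplex
on y_1, ..., y_m, and is homotopic to the constant map onto y_1 in the same way.\<close>

lemma continuous_map_real_Min:
  fixes g :: "'b \<Rightarrow> 'x \<Rightarrow> real"
  assumes "finite A" "A \<noteq> {}" "\<And>a. a \<in> A \<Longrightarrow> continuous_map X euclideanreal (g a)"
  shows "continuous_map X euclideanreal (\<lambda>x. Min ((\<lambda>a. g a x) ` A))"
  using assms
proof (induction A rule: finite_ne_induct)
  case (insert a A)
  have "(\<lambda>x. Min ((\<lambda>a. g a x) ` insert a A)) = (\<lambda>x. min (g a x) (Min ((\<lambda>a. g a x) ` A)))"
    using insert by (simp add: Min_insert)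
  then show ?case
    using insert by (simp add: continuous_map_real_min)
qed simp

lemma continuous_map_real_Max_insert:
  fixes g :: "'b \<Rightarrow> 'x \<Rightarrow> real"
  assumes "finite A" "\<And>a. a \<in> A \<Longrightarrow> continuous_map X euclideanreal (g a)"
  shows "continuous_map X euclideanreal (\<lambda>x. Max (insert c ((\<lambda>a. g a x) ` A)))"
  using assms
proof (induction A rule: finite_induct)
  case (insert a A)
  have "(\<lambda>x. Max (insert c ((\<lambda>a. g a x) ` insert a A)))
      = (\<lambda>x. max (g a x) (Max (insert c ((\<lambda>a. g a x) ` A))))"
  proof
    fix x
    have "insert c ((\<lambda>a. g a x) ` insert a A) = insert (g a x) (insert c ((\<lambda>a. g a x) ` A))"
      by auto
    then show "Max (insert c ((\<lambda>a. g a x) ` insert a A)) = max (g a x) (Max (insert c ((\<lambda>a. g a x) ` A)))"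
      using insert(1) by simp
  qed
  then show ?case
    using insert by (simp add: continuous_map_real_max)
qed simp

lemma homotopic_with_chain:
  assumes "\<And>k. k < n \<Longrightarrow> homotopic_with P X Y (g (Suc k)) (g k)"
    and "continuous_map X Y (g 0)" "P (g 0)"
  shows "homotopic_with P X Y (g n) (g 0)"
  using assms(1)
proof (induction n)
  case (Suc n)
  then show ?case
    by (meson homotopic_with_trans lessI less_SucI)
qed (use assms(2,3) in simp)

lemma topspace_geom_top [simp]: "topspace (geom_top K) = geom_realization K"
  by (simp add: geom_top_def)

lemma continuous_map_geom_coordinate: "continuous_map (geom_top K) euclideanreal (\<lambda>f. f v)"
  unfolding geom_top_def
  by (rule continuous_map_from_subtopology) (rule continuous_map_product_projection, simp)

lemma continuous_map_into_geom_top: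
  assumes "\<And>v. continuous_map X euclideanreal (\<lambda>x. g x v)"
    and "\<And>x. x \<in> topspace X \<Longrightarrow> g x \<in> geom_realization K"
  shows "continuous_map X (geom_top K) g"
  using assms unfolding geom_top_def continuous_map_in_subtopology continuous_map_componentwise_UNIV
  by auto

lemma sum_over_support:
  fixes f :: "'v \<Rightarrow> real"
  assumes "finite U" "{v. f v \<noteq> 0} \<subseteq> U"
  shows "sum f {v. f v \<noteq> 0} = sum f U"
  by (rule sum.mono_neutral_left) (use assms in auto)

lemma geom_realization_iff:
  assumes "simplicial_complex V K" "F \<in> K" "{v. f v \<noteq> 0} \<subseteq> F"
  shows "f \<in> geom_realization K \<longleftrightarrow> (\<forall>v. 0 \<le> f v) \<and> sum f F = 1"
proof -
  have "finite F"
    using assms(1,2) finite_subset by (auto simp: simplicial_complex_def)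
  moreover have "{v. f v \<noteq> 0} \<in> K"
    using assms by (auto simp: simplicial_complex_def)
  ultimately show ?thesis
    using assms(3) by (simp add: geom_realization_def sum_over_support)
qed

lemma homotopic_maps_into_common_face:
  assumes K: "simplicial_complex V K"
    and p: "continuous_map X (geom_top K) p" and q: "continuous_map X (geom_top K) q"
    and face: "\<And>x. x \<in> topspace X \<Longrightarrow> \<exists>F\<in>K. {v. p x v \<noteq> 0} \<union> {v. q x v \<noteq> 0} \<subseteq> F"
  shows "homotopic_with (\<lambda>_. True) X (geom_top K) p q"
  unfolding homotopic_with_def
proof (intro exI conjI allI ballI TrueI)
  define h where "h = (\<lambda>(t::real, x). \<lambda>v. (1 - t) * p x v + t * q x v)"
  show "h (0, x) = p x" "h (1, x) = q x" for x
    by (simp_all add: h_def)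
  let ?T = "prod_topology (top_of_set {0..1}) X"
  have coord: "continuous_map ?T euclideanreal (\<lambda>z. r (snd z) v)"
    if "continuous_map X (geom_top K) r" for r v
    using continuous_map_compose[OF continuous_map_compose[OF continuous_map_snd that]
        continuous_map_geom_coordinate]
    by (simp add: o_def)
  have fst: "continuous_map ?T euclideanreal fst"
    by (metis continuous_map_fst continuous_map_in_subtopology)
  have in_realization: "h (t, x) \<in> geom_realization K" if t: "t \<in> {0..1}" and x: "x \<in> topspace X" for t x
  proof -
    obtain F where F: "F \<in> K" "{v. p x v \<noteq> 0} \<union> {v. q x v \<noteq> 0} \<subseteq> F"
      using face[OF x] by blast
    have "p x \<in> geom_realization K" "q x \<in> geom_realization K"
      using p q x by (auto dest!: continuous_map_image_subset_topspace)
    then have "\<forall>v. 0 \<le> p x v" "sum (p x) F = 1" "\<forall>v. 0 \<le> q x v" "sum (q x) F = 1"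
      using geom_realization_iff[OF K F(1), of "p x"] geom_realization_iff[OF K F(1), of "q x"] F(2)
      by auto
    moreover have "{v. h (t, x) v \<noteq> 0} \<subseteq> F"
      using F(2) by (force simp: h_def)
    ultimately show ?thesis
      using t geom_realization_iff[OF K F(1)]
      by (simp add: h_def sum.distrib flip: sum_distrib_left)
  qed
  show "continuous_map ?T (geom_top K) h"
  proof (rule continuous_map_into_geom_top)
    show "continuous_map ?T euclideanreal (\<lambda>z. h z v)" for v
      unfolding h_def case_prod_unfold
      by (intro continuous_map_add continuous_map_real_mult continuous_map_diff fst coord p q
          continuous_map_canonical_const)
    show "z \<in> topspace ?T \<Longrightarrow> h z \<in> geom_realization K" for z
      using in_realization by (cases z) auto
  qed
qed

lemma geom_realization_nonneg: "f \<in> geom_realization K \<Longrightarrow> 0 \<le> f v"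
  by (simp add: geom_realization_def)

lemma geom_realization_support_nonempty: "f \<in> geom_realization K \<Longrightarrow> {v. f v \<noteq> 0} \<noteq> {}"
  unfolding geom_realization_def by (metis (mono_tags) mem_Collect_eq sum.empty zero_neq_one)

definition cover_indices :: "(nat \<Rightarrow> 'a set set) \<Rightarrow> nat \<Rightarrow> 'a set \<Rightarrow> nat set" where
  "cover_indices \<Gamma>s m \<rho> = {j \<in> {1..m}. \<rho> \<in> \<Gamma>s j}"

lemma cone_ext_iff:
  "F \<in> cone_ext \<Gamma> \<Gamma>s m \<longleftrightarrow> (\<exists>\<sigma> \<tau>. F = Inl ` \<sigma> \<union> Inr ` \<tau> \<and> \<sigma> \<in> \<Gamma> \<and> \<tau> \<subseteq> cover_indices \<Gamma>s m \<sigma>)"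
  by (auto simp: cone_ext_def cover_indices_def)

lemma Inl_Inr_decomposition: "G = Inl ` {x. Inl x \<in> G} \<union> Inr ` {j. Inr j \<in> G}"
  by (rule set_eqI, case_tac x) auto

lemma simplicial_complex_cone_ext:
  assumes \<Gamma>: "simplicial_complex V \<Gamma>"
    and \<Gamma>s: "\<And>j. j \<in> {1..m} \<Longrightarrow> simplicial_complex V (\<Gamma>s j)"
  shows "simplicial_complex (Inl ` V \<union> Inr ` {1..m}) (cone_ext \<Gamma> \<Gamma>s m)"
proof -
  have cover_antimono: "cover_indices \<Gamma>s m \<sigma> \<subseteq> cover_indices \<Gamma>s m \<rho>" if "\<rho> \<subseteq> \<sigma>" for \<rho> \<sigma>
    using \<Gamma>s that by (auto simp: cover_indices_def simplicial_complex_def)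
  have "G \<in> cone_ext \<Gamma> \<Gamma>s m" if FK: "F \<in> cone_ext \<Gamma> \<Gamma>s m" and GF: "G \<subseteq> F" for F G
  proof -
    obtain \<sigma> \<tau> where F: "F = Inl ` \<sigma> \<union> Inr ` \<tau>" "\<sigma> \<in> \<Gamma>" "\<tau> \<subseteq> cover_indices \<Gamma>s m \<sigma>"
      using FK unfolding cone_ext_iff by blast
    have \<sigma>G: "{x. Inl x \<in> G} \<subseteq> \<sigma>" and \<tau>G: "{j. Inr j \<in> G} \<subseteq> \<tau>"
      using F(1) GF by auto
    have "{x. Inl x \<in> G} \<in> \<Gamma>"
      using \<Gamma> F(2) \<sigma>G unfolding simplicial_complex_def by blast
    moreover have "{j. Inr j \<in> G} \<subseteq> cover_indices \<Gamma>s m {x. Inl x \<in> G}"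
      using F(3) \<tau>G cover_antimono[OF \<sigma>G] by blast
    ultimately show ?thesis
      unfolding cone_ext_iff by (metis Inl_Inr_decomposition)
  qed
  moreover have "F \<subseteq> Inl ` V \<union> Inr ` {1..m}" if FK: "F \<in> cone_ext \<Gamma> \<Gamma>s m" for F
  proof -
    obtain \<sigma> \<tau> where "F = Inl ` \<sigma> \<union> Inr ` \<tau>" "\<sigma> \<in> \<Gamma>" "\<tau> \<subseteq> cover_indices \<Gamma>s m \<sigma>"
      using FK unfolding cone_ext_iff by blast
    moreover have "\<sigma> \<subseteq> V"
      using \<Gamma> \<open>\<sigma> \<in> \<Gamma>\<close> by (simp add: simplicial_complex_def)
    ultimately show ?thesis
      by (auto simp: cover_indices_def)
  qed
  moreover have "{} \<in> cone_ext \<Gamma> \<Gamma>s m"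
    using \<Gamma> unfolding cone_ext_iff simplicial_complex_def by (metis empty_subsetI image_empty sup_bot.right_neutral)
  ultimately show ?thesis
    using \<Gamma> unfolding simplicial_complex_def by (meson finite_Un finite_imageI finite_atLeastAtMost)
qed

locale covered_complex =
  fixes V1 :: "'a set" and \<Gamma> :: "'a set set" and \<Gamma>s :: "nat \<Rightarrow> 'a set set" and m :: nat
  assumes \<Gamma>: "simplicial_complex V1 \<Gamma>"
    and m_pos: "m \<ge> 1"
    and \<Gamma>s: "\<And>j. j \<in> {1..m} \<Longrightarrow> simplicial_complex V1 (\<Gamma>s j) \<and> \<Gamma>s j \<subseteq> \<Gamma>"
    and \<Gamma>_cover: "\<Gamma> = (\<Union>j\<in>{1..m}. \<Gamma>s j)"
begin

abbreviation "K \<equiv> cone_ext \<Gamma> \<Gamma>s m"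
abbreviation "V \<equiv> Inl ` V1 \<union> Inr ` {1..m}"
abbreviation "cov \<equiv> cover_indices \<Gamma>s m"

lemma simplicial_complex_K: "simplicial_complex V K"
  using \<Gamma> \<Gamma>s by (intro simplicial_complex_cone_ext) auto

lemma K_downward_closed: "F \<in> K \<Longrightarrow> G \<subseteq> F \<Longrightarrow> G \<in> K"
  using simplicial_complex_K unfolding simplicial_complex_def by blast

lemma finite_V1: "finite V1"
  using \<Gamma> by (simp add: simplicial_complex_def)

lemma face_subset_V1: "\<sigma> \<in> \<Gamma> \<Longrightarrow> \<sigma> \<subseteq> V1"
  using \<Gamma> by (auto simp: simplicial_complex_def)

lemma face_downward_closed: "\<sigma> \<in> \<Gamma> \<Longrightarrow> \<rho> \<subseteq> \<sigma> \<Longrightarrow> \<rho> \<in> \<Gamma>"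
  using \<Gamma> by (auto simp: simplicial_complex_def)

lemma cov_antimono: "\<rho> \<subseteq> \<sigma> \<Longrightarrow> cov \<sigma> \<subseteq> cov \<rho>"
  using \<Gamma>s by (auto simp: cover_indices_def simplicial_complex_def)

lemma cov_subset: "cov \<rho> \<subseteq> {1..m}"
  by (auto simp: cover_indices_def)

lemma cov_nonempty: "\<rho> \<in> \<Gamma> \<Longrightarrow> cov \<rho> \<noteq> {}"
  using \<Gamma>_cover by (auto simp: cover_indices_def)

lemma cov_empty: "cov {} = {1..m}"
  using \<Gamma>s by (auto simp: cover_indices_def simplicial_complex_def)

lemma face_K: "\<sigma> \<in> \<Gamma> \<Longrightarrow> \<tau> \<subseteq> cov \<sigma> \<Longrightarrow> Inl ` \<sigma> \<union> Inr ` \<tau> \<in> K"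
  by (auto simp: cone_ext_iff)

definition xsupp :: "('a + nat \<Rightarrow> real) \<Rightarrow> 'a set" where
  "xsupp f = {x. f (Inl x) \<noteq> 0}"

definition ysupp :: "('a + nat \<Rightarrow> real) \<Rightarrow> nat set" where
  "ysupp f = {j. f (Inr j) \<noteq> 0}"

lemma support_eq_xsupp_ysupp: "{v. f v \<noteq> 0} = Inl ` xsupp f \<union> Inr ` ysupp f"
  unfolding xsupp_def ysupp_def by (rule set_eqI, case_tac x) auto

lemma
  assumes "f \<in> geom_realization K"
  shows xsupp_face: "xsupp f \<in> \<Gamma>" and ysupp_subset_cov: "ysupp f \<subseteq> cov (xsupp f)"
proof -
  obtain \<sigma> \<tau> where F: "{v. f v \<noteq> 0} = Inl ` \<sigma> \<union> Inr ` \<tau>" "\<sigma> \<in> \<Gamma>" "\<tau> \<subseteq> cov \<sigma>"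
    using assms unfolding geom_realization_def cone_ext_iff by blast
  then have "\<sigma> = xsupp f" "\<tau> = ysupp f"
    unfolding xsupp_def ysupp_def by (auto simp: set_eq_iff image_iff)+
  then show "xsupp f \<in> \<Gamma>" "ysupp f \<subseteq> cov (xsupp f)"
    using F by auto
qed

lemma xsupp_subset_V1: "f \<in> geom_realization K \<Longrightarrow> xsupp f \<subseteq> V1"
  using xsupp_face face_subset_V1 by blast

text \<open>Positive exactly on the blocks of f, i.e. the nonempty \<rho> \<subseteq> V1 on which the old coordinates
of f are positive and strictly larger than all other old coordinates.\<close>
definition level_gap :: "('a + nat \<Rightarrow> real) \<Rightarrow> 'a set \<Rightarrow> real" where
  "level_gap f \<rho> = (if \<rho> = {} then 0 else
     max 0 (Min ((\<lambda>x. f (Inl x)) ` \<rho>) - Max (insert 0 ((\<lambda>x. f (Inl x)) ` (V1 - \<rho>)))))"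

lemma level_gap_nonneg: "0 \<le> level_gap f \<rho>"
  by (simp add: level_gap_def)

lemma level_gap_posD:
  assumes "level_gap f \<rho> > 0" "\<rho> \<subseteq> V1"
  shows "\<rho> \<noteq> {}" "\<And>x y. x \<in> \<rho> \<Longrightarrow> y \<in> V1 - \<rho> \<Longrightarrow> f (Inl y) < f (Inl x)"
    "\<And>x. x \<in> \<rho> \<Longrightarrow> 0 < f (Inl x)"
proof -
  show ne: "\<rho> \<noteq> {}"
    using assms by (auto simp: level_gap_def)
  have "finite \<rho>"
    using assms(2) finite_V1 finite_subset by blast
  then have Min_le: "Min ((\<lambda>x. f (Inl x)) ` \<rho>) \<le> f (Inl x)" if "x \<in> \<rho>" for x
    using that by simp
  have le_Max: "z \<le> Max (insert 0 ((\<lambda>x. f (Inl x)) ` (V1 - \<rho>)))"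
    if "z \<in> insert 0 ((\<lambda>x. f (Inl x)) ` (V1 - \<rho>))" for z
    using finite_V1 that by (intro Max_ge) auto
  have sep: "Max (insert 0 ((\<lambda>x. f (Inl x)) ` (V1 - \<rho>))) < Min ((\<lambda>x. f (Inl x)) ` \<rho>)"
    using assms ne by (auto simp: level_gap_def split: if_splits)
  show "\<And>x y. x \<in> \<rho> \<Longrightarrow> y \<in> V1 - \<rho> \<Longrightarrow> f (Inl y) < f (Inl x)"
    using Min_le le_Max sep by (meson insertI2 image_eqI less_le_trans le_less_trans)
  show "\<And>x. x \<in> \<rho> \<Longrightarrow> 0 < f (Inl x)"
    using Min_le le_Max sep by (meson insertI1 less_le_trans le_less_trans)
qed

lemma level_gap_pos_chain:
  assumes "level_gap f \<rho> > 0" "level_gap f \<rho>' > 0" "\<rho> \<subseteq> V1" "\<rho>' \<subseteq> V1"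
  shows "\<rho> \<subseteq> \<rho>' \<or> \<rho>' \<subseteq> \<rho>"
proof (rule ccontr)
  assume "\<not> ?thesis"
  then obtain x y where "x \<in> \<rho>" "x \<notin> \<rho>'" "y \<in> \<rho>'" "y \<notin> \<rho>"
    by blast
  then have "f (Inl y) < f (Inl x)" "f (Inl x) < f (Inl y)"
    using level_gap_posD(2)[OF assms(1,3)] level_gap_posD(2)[OF assms(2,4)] assms(3,4) by blast+
  then show False
    by simp
qed

lemma level_gap_pos_subset_xsupp: "level_gap f \<rho> > 0 \<Longrightarrow> \<rho> \<subseteq> V1 \<Longrightarrow> \<rho> \<subseteq> xsupp f"
  using level_gap_posD(3) by (fastforce simp: xsupp_def)

lemma level_gap_pos_face:
  "f \<in> geom_realization K \<Longrightarrow> level_gap f \<rho> > 0 \<Longrightarrow> \<rho> \<subseteq> V1 \<Longrightarrow> \<rho> \<in> \<Gamma>"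
  using face_downward_closed xsupp_face level_gap_pos_subset_xsupp by blast

lemma continuous_map_level_gap:
  assumes "\<rho> \<subseteq> V1"
  shows "continuous_map (geom_top K) euclideanreal (\<lambda>f. level_gap f \<rho>)"
proof (cases "\<rho> = {}")
  case False
  have "finite \<rho>"
    using assms finite_V1 finite_subset by blast
  then have "continuous_map (geom_top K) euclideanreal (\<lambda>f. Min ((\<lambda>x. f (Inl x)) ` \<rho>))"
    using False by (intro continuous_map_real_Min continuous_map_geom_coordinate)
  moreover have "continuous_map (geom_top K) euclideanreal
      (\<lambda>f. Max (insert 0 ((\<lambda>x. f (Inl x)) ` (V1 - \<rho>))))"
    using finite_V1 by (intro continuous_map_real_Max_insert continuous_map_geom_coordinate) auto
  ultimately show ?thesis
    using False by (simp add: level_gap_def continuous_map_real_max continuous_map_diff)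
qed (simp add: level_gap_def)

text \<open>The set of old vertices where f is maximal is a block.\<close>
lemma exists_level_gap_pos:
  assumes f: "f \<in> geom_realization K" and ne: "xsupp f \<noteq> {}"
  shows "\<exists>\<rho>\<subseteq>V1. level_gap f \<rho> > 0"
proof -
  let ?a = "\<lambda>x. f (Inl x)"
  obtain x0 where x0: "x0 \<in> xsupp f"
    using ne by blast
  have x0V: "x0 \<in> V1"
    using x0 xsupp_subset_V1[OF f] by blast
  define M where "M = Max (?a ` V1)"
  have le_M: "?a x \<le> M" if "x \<in> V1" for x
    using finite_V1 that by (simp add: M_def)
  have M_pos: "0 < M"
    using le_M[OF x0V] x0 geom_realization_nonneg[OF f, of "Inl x0"]
    by (simp add: xsupp_def)
  define \<rho> where "\<rho> = {x \<in> V1. ?a x = M}"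
  have "M \<in> ?a ` V1"
    unfolding M_def using finite_V1 x0V by (intro Max_in) auto
  then have \<rho>_ne: "\<rho> \<noteq> {}"
    by (auto simp: \<rho>_def)
  then have "?a ` \<rho> = {M}"
    by (auto simp: \<rho>_def)
  moreover have "z < M" if "z \<in> insert 0 (?a ` (V1 - \<rho>))" for z
    using that M_pos le_M by (auto simp: \<rho>_def less_le)
  then have "Max (insert 0 (?a ` (V1 - \<rho>))) < M"
    using finite_V1 by (subst Max_less_iff) simp_all
  ultimately have "level_gap f \<rho> > 0"
    using \<rho>_ne by (simp add: level_gap_def)
  moreover have "\<rho> \<subseteq> V1"
    by (simp add: \<rho>_def)
  ultimately show ?thesis
    by blast
qed

definition target :: "nat \<Rightarrow> 'a set \<Rightarrow> ('a + nat) set" where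
  "target k \<rho> = (if card \<rho> \<le> k then Inl ` \<rho> else Inr ` cov \<rho>)"

definition mass :: "nat \<Rightarrow> ('a + nat \<Rightarrow> real) \<Rightarrow> 'a + nat \<Rightarrow> real" where
  "mass k f v = (case v of Inl _ \<Rightarrow> 0 | Inr j \<Rightarrow> f (Inr j))
     + (\<Sum>\<rho>\<in>Pow V1. level_gap f \<rho> * indicator (target k \<rho>) v)"

definition stage :: "nat \<Rightarrow> ('a + nat \<Rightarrow> real) \<Rightarrow> 'a + nat \<Rightarrow> real" where
  "stage k f v = mass k f v / sum (mass k f) V"

definition small_blocks :: "nat \<Rightarrow> ('a + nat \<Rightarrow> real) \<Rightarrow> 'a set" where
  "small_blocks k f = \<Union>{\<rho>\<in>Pow V1. level_gap f \<rho> > 0 \<and> card \<rho> \<le> k}"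

definition large_block_indices :: "nat \<Rightarrow> ('a + nat \<Rightarrow> real) \<Rightarrow> nat set" where
  "large_block_indices k f =
     ysupp f \<union> \<Union>(cov ` {\<rho>\<in>Pow V1. level_gap f \<rho> > 0 \<and> k < card \<rho>})"

lemma small_blocks_mono: "k \<le> k' \<Longrightarrow> small_blocks k f \<subseteq> small_blocks k' f"
  by (auto simp: small_blocks_def)

lemma large_block_indices_antimono: "k \<le> k' \<Longrightarrow> large_block_indices k' f \<subseteq> large_block_indices k f"
  by (auto simp: large_block_indices_def)

lemma small_blocks_subset_xsupp: "small_blocks k f \<subseteq> xsupp f"
  using level_gap_pos_subset_xsupp by (auto simp: small_blocks_def)

lemma large_block_indices_subset: "f \<in> geom_realization K \<Longrightarrow> large_block_indices k f \<subseteq> {1..m}"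
  using ysupp_subset_cov cov_subset by (fastforce simp: large_block_indices_def)

text \<open>Blocks form a chain, so every block larger than k2 contains every block of size at most
k2 + 1; this is what makes consecutive stages compatible.\<close>
lemma small_large_face:
  assumes f: "f \<in> geom_realization K" and k: "k1 \<le> Suc k2"
  shows "Inl ` small_blocks k1 f \<union> Inr ` large_block_indices k2 f \<in> K"
proof (rule face_K)
  show "small_blocks k1 f \<in> \<Gamma>"
    using face_downward_closed[OF xsupp_face[OF f] small_blocks_subset_xsupp] .
  show "large_block_indices k2 f \<subseteq> cov (small_blocks k1 f)"
  proof
    fix j assume "j \<in> large_block_indices k2 f"
    then consider "j \<in> ysupp f"
      | \<rho> where "\<rho> \<subseteq> V1" "level_gap f \<rho> > 0" "k2 < card \<rho>" "j \<in> cov \<rho>"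
      by (auto simp: large_block_indices_def)
    then show "j \<in> cov (small_blocks k1 f)"
    proof cases
      case 1
      then show ?thesis
        using ysupp_subset_cov[OF f] cov_antimono[OF small_blocks_subset_xsupp] by blast
    next
      case 2
      have "\<rho>' \<subseteq> \<rho>" if "\<rho>' \<subseteq> V1" "level_gap f \<rho>' > 0" "card \<rho>' \<le> k1" for \<rho>'
      proof (rule ccontr)
        assume "\<not> \<rho>' \<subseteq> \<rho>"
        then have "\<rho> \<subset> \<rho>'"
          using level_gap_pos_chain[OF 2(2) that(2) 2(1) that(1)] by blast
        then have "card \<rho> < card \<rho>'"
          using that(1) finite_V1 by (meson finite_subset psubset_card_mono)
        then show False
          using 2(3) that(3) k by linarith
      qed
      then have "small_blocks k1 f \<subseteq> \<rho>"
        by (auto simp: small_blocks_def)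
      then show ?thesis
        using cov_antimono 2(4) by blast
    qed
  qed
qed

lemma mass_nonneg: "f \<in> geom_realization K \<Longrightarrow> 0 \<le> mass k f v"
  unfolding mass_def using geom_realization_nonneg[of f K]
  by (intro add_nonneg_nonneg sum_nonneg mult_nonneg_nonneg level_gap_nonneg)
    (auto split: sum.split)

lemma mass_ge_block:
  assumes "f \<in> geom_realization K" "\<rho> \<subseteq> V1" "v \<in> target k \<rho>"
  shows "level_gap f \<rho> \<le> mass k f v"
proof -
  have "level_gap f \<rho> * indicator (target k \<rho>) v \<le> (\<Sum>\<rho>\<in>Pow V1. level_gap f \<rho> * indicator (target k \<rho>) v)"
    using assms(2) finite_V1 level_gap_nonneg by (intro member_le_sum) auto
  moreover have "0 \<le> (case v of Inl _ \<Rightarrow> 0 | Inr j \<Rightarrow> f (Inr j))"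
    using geom_realization_nonneg[OF assms(1)] by (simp split: sum.split)
  ultimately show ?thesis
    using assms(3) by (simp add: mass_def)
qed

lemma support_mass:
  "{v. mass k f v \<noteq> 0} \<subseteq> Inl ` small_blocks k f \<union> Inr ` large_block_indices k f"
proof
  fix v assume "v \<in> {v. mass k f v \<noteq> 0}"
  then have "(case v of Inl _ \<Rightarrow> 0 | Inr j \<Rightarrow> f (Inr j)) \<noteq> 0
      \<or> (\<Sum>\<rho>\<in>Pow V1. level_gap f \<rho> * indicator (target k \<rho>) v) \<noteq> 0"
    by (auto simp: mass_def)
  then show "v \<in> Inl ` small_blocks k f \<union> Inr ` large_block_indices k f"
  proof
    assume "(case v of Inl _ \<Rightarrow> 0 | Inr j \<Rightarrow> f (Inr j)) \<noteq> 0"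
    then show ?thesis
      by (cases v) (auto simp: large_block_indices_def ysupp_def)
  next
    assume "(\<Sum>\<rho>\<in>Pow V1. level_gap f \<rho> * indicator (target k \<rho>) v) \<noteq> 0"
    then obtain \<rho> where \<rho>: "\<rho> \<subseteq> V1" "level_gap f \<rho> * indicator (target k \<rho>) v \<noteq> 0"
      by (meson PowD sum.not_neutral_contains_not_neutral)
    then have "level_gap f \<rho> > 0" "v \<in> target k \<rho>"
      using level_gap_nonneg[of f \<rho>] by (auto simp: less_le indicator_def split: if_splits)
    then show ?thesis
      using \<rho>(1) by (auto simp: target_def small_blocks_def large_block_indices_def split: if_splits)
  qed
qed

lemma support_mass_subset_V: "f \<in> geom_realization K \<Longrightarrow> {v. mass k f v \<noteq> 0} \<subseteq> V"
  using support_mass[of k f] small_blocks_subset_xsupp[of k f] xsupp_subset_V1[of f]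
    large_block_indices_subset[of f k]
  by blast

lemma sum_mass_pos:
  assumes f: "f \<in> geom_realization K"
  shows "0 < sum (mass k f) V"
proof -
  have "\<exists>v\<in>V. 0 < mass k f v"
  proof (cases "ysupp f = {}")
    case False
    then obtain j where j: "f (Inr j) \<noteq> 0"
      by (auto simp: ysupp_def)
    then have "j \<in> {1..m}"
      using ysupp_subset_cov[OF f] cov_subset unfolding ysupp_def by blast
    moreover have "f (Inr j) \<le> mass k f (Inr j)"
      unfolding mass_def using level_gap_nonneg by (simp add: sum_nonneg)
    ultimately show ?thesis
      using j geom_realization_nonneg[OF f, of "Inr j"] by force
  next
    case True
    then have "xsupp f \<noteq> {}"
      using geom_realization_support_nonempty[OF f] support_eq_xsupp_ysupp[of f] by auto
    then obtain \<rho> where \<rho>: "\<rho> \<subseteq> V1" "level_gap f \<rho> > 0"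
      using exists_level_gap_pos[OF f] by blast
    have "\<rho> \<noteq> {}" "cov \<rho> \<noteq> {}"
      using level_gap_posD(1)[OF \<rho>(2,1)] cov_nonempty[OF level_gap_pos_face[OF f \<rho>(2,1)]] by auto
    then have "target k \<rho> \<noteq> {}"
      by (simp add: target_def)
    then obtain v where "v \<in> target k \<rho>"
      by blast
    moreover have "target k \<rho> \<subseteq> V"
      using \<rho>(1) cov_subset[of \<rho>] by (auto simp: target_def)
    ultimately show ?thesis
      using mass_ge_block[OF f \<rho>(1)] \<rho>(2) by force
  qed
  then obtain v where "v \<in> V" "0 < mass k f v"
    by blast
  moreover have "mass k f v \<le> sum (mass k f) V"
    using \<open>v \<in> V\<close> finite_V1 mass_nonneg[OF f] by (intro member_le_sum) auto
  ultimately show ?thesis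
    by linarith
qed

lemma support_stage: "f \<in> geom_realization K \<Longrightarrow> {v. stage k f v \<noteq> 0} = {v. mass k f v \<noteq> 0}"
  using sum_mass_pos[of f k] by (auto simp: stage_def)

lemma stage_in_realization:
  assumes f: "f \<in> geom_realization K"
  shows "stage k f \<in> geom_realization K"
proof -
  have "{v. stage k f v \<noteq> 0} \<in> K"
    unfolding support_stage[OF f]
    by (rule K_downward_closed[OF small_large_face[OF f order.refl[THEN le_SucI]] support_mass])
  moreover have "sum (stage k f) {v. stage k f v \<noteq> 0} = sum (stage k f) V"
  proof (rule sum_over_support)
    show "{v. stage k f v \<noteq> 0} \<subseteq> V"
      using support_mass_subset_V[OF f] support_stage[OF f] by metis
  qed (simp add: finite_V1)
  moreover have "sum (stage k f) V = 1"
    using sum_mass_pos[OF f, of k] by (simp add: stage_def flip: sum_divide_distrib)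
  moreover have "0 \<le> stage k f v" for v
    unfolding stage_def using mass_nonneg[OF f] sum_mass_pos[OF f] by (intro divide_nonneg_pos)
  ultimately show ?thesis
    by (simp add: geom_realization_def)
qed

lemma continuous_map_mass: "continuous_map (geom_top K) euclideanreal (\<lambda>f. mass k f v)"
proof -
  have "continuous_map (geom_top K) euclideanreal (\<lambda>f. case v of Inl _ \<Rightarrow> 0 | Inr j \<Rightarrow> f (Inr j))"
    by (cases v) (simp_all add: continuous_map_geom_coordinate)
  moreover have "continuous_map (geom_top K) euclideanreal
      (\<lambda>f. level_gap f \<rho> * indicator (target k \<rho>) v)" if "\<rho> \<in> Pow V1" for \<rho>
    using continuous_map_level_gap that
    by (intro continuous_map_real_mult continuous_map_canonical_const) auto
  ultimately show ?thesis
    unfolding mass_def using finite_V1 by (intro continuous_map_add continuous_map_sum) auto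
qed

lemma continuous_map_stage: "continuous_map (geom_top K) (geom_top K) (stage k)"
proof (rule continuous_map_into_geom_top)
  show "continuous_map (geom_top K) euclideanreal (\<lambda>f. stage k f v)" for v
    unfolding stage_def using finite_V1 sum_mass_pos[THEN less_imp_neq, THEN not_sym]
    by (intro continuous_map_real_divide continuous_map_mass continuous_map_sum) auto
qed (simp add: stage_in_realization)

lemma homotopic_id_stage: "homotopic_with (\<lambda>_. True) (geom_top K) (geom_top K) id (stage (card V1))"
proof (rule homotopic_maps_into_common_face[OF simplicial_complex_K continuous_map_id continuous_map_stage])
  fix f assume "f \<in> topspace (geom_top K)"
  then have f: "f \<in> geom_realization K"
    by simp
  have "\<not> card V1 < card \<rho>" if "\<rho> \<subseteq> V1" for \<rho>
    using card_mono[OF finite_V1 that] by linarith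
  then have "large_block_indices (card V1) f = ysupp f"
    by (auto simp: large_block_indices_def)
  then have "{v. stage (card V1) f v \<noteq> 0} \<subseteq> Inl ` small_blocks (card V1) f \<union> Inr ` ysupp f"
    using support_stage[OF f] support_mass[of "card V1" f] by simp
  also have "\<dots> \<subseteq> {v. f v \<noteq> 0}"
    unfolding support_eq_xsupp_ysupp using small_blocks_subset_xsupp by blast
  finally show "\<exists>F\<in>K. {v. id f v \<noteq> 0} \<union> {v. stage (card V1) f v \<noteq> 0} \<subseteq> F"
    using f unfolding geom_realization_def by (intro bexI[of _ "{v. f v \<noteq> 0}"]) auto
qed

lemma homotopic_stage_Suc: "homotopic_with (\<lambda>_. True) (geom_top K) (geom_top K) (stage (Suc k)) (stage k)"
proof (rule homotopic_maps_into_common_face[OF simplicial_complex_K continuous_map_stage continuous_map_stage])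
  fix f assume "f \<in> topspace (geom_top K)"
  then have f: "f \<in> geom_realization K"
    by simp
  have "{v. stage (Suc k) f v \<noteq> 0} \<union> {v. stage k f v \<noteq> 0}
      \<subseteq> Inl ` small_blocks (Suc k) f \<union> Inr ` large_block_indices k f"
    unfolding support_stage[OF f]
  proof (rule Un_least; rule subset_trans[OF support_mass])
    show "Inl ` small_blocks (Suc k) f \<union> Inr ` large_block_indices (Suc k) f
        \<subseteq> Inl ` small_blocks (Suc k) f \<union> Inr ` large_block_indices k f"
      by (intro Un_mono order.refl image_mono large_block_indices_antimono) simp
    show "Inl ` small_blocks k f \<union> Inr ` large_block_indices k f
        \<subseteq> Inl ` small_blocks (Suc k) f \<union> Inr ` large_block_indices k f"
      by (intro Un_mono order.refl image_mono small_blocks_mono) simp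
  qed
  then show "\<exists>F\<in>K. {v. stage (Suc k) f v \<noteq> 0} \<union> {v. stage k f v \<noteq> 0} \<subseteq> F"
    using small_large_face[OF f, of "Suc k" k] by blast
qed

lemma homotopic_stage_0_const:
  "homotopic_with (\<lambda>_. True) (geom_top K) (geom_top K) (stage 0) (\<lambda>_. indicator {Inr 1})"
proof -
  have simplex: "Inr ` {1..m} \<in> K"
    using face_K[of "{}" "{1..m}"] \<Gamma> cov_empty by (simp add: simplicial_complex_def)
  have "indicator {Inr 1} \<in> geom_realization K"
    using geom_realization_iff[OF simplicial_complex_K simplex] m_pos by (auto simp: indicator_def)
  then have const: "continuous_map (geom_top K) (geom_top K) (\<lambda>_. indicator {Inr 1})"
    by simp
  show ?thesis
  proof (rule homotopic_maps_into_common_face[OF simplicial_complex_K continuous_map_stage const])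
    fix f assume "f \<in> topspace (geom_top K)"
    then have f: "f \<in> geom_realization K"
      by simp
    have no_small: "small_blocks 0 f = {}"
      using finite_V1 by (auto simp: small_blocks_def dest: level_gap_posD(1) finite_subset)
    have "{v. stage 0 f v \<noteq> 0} \<subseteq> Inr ` {1..m}"
      using support_mass[of 0 f] image_mono[OF large_block_indices_subset[OF f, of 0], of Inr]
      unfolding support_stage[OF f] no_small by blast
    moreover have "{v. indicator {Inr 1} v \<noteq> (0::real)} \<subseteq> Inr ` {1..m}"
      using m_pos by (auto simp: indicator_def)
    ultimately show "\<exists>F\<in>K. {v. stage 0 f v \<noteq> 0} \<union> {v. indicator {Inr 1} v \<noteq> (0::real)} \<subseteq> F"
      using simplex by blast
  qed
qed

lemma contractible_space_cone_ext: "contractible_space (geom_top K)"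
proof -
  have "homotopic_with (\<lambda>_. True) (geom_top K) (geom_top K) (stage (card V1)) (stage 0)"
    using homotopic_stage_Suc continuous_map_stage by (intro homotopic_with_chain) auto
  then show ?thesis
    unfolding contractible_space_def
    using homotopic_id_stage homotopic_stage_0_const by (meson homotopic_with_trans)
qed

end

theorem lemma4p2:
  fixes V1 :: "'a set" and \<Gamma> :: "'a set set" and \<Gamma>s :: "nat \<Rightarrow> 'a set set" and m :: nat
  assumes "simplicial_complex V1 \<Gamma>"
    and "m \<ge> 1"
    and "\<And>j. j \<in> {1..m} \<Longrightarrow> simplicial_complex V1 (\<Gamma>s j) \<and> \<Gamma>s j \<subseteq> \<Gamma>"
    and "\<Gamma> = (\<Union>j\<in>{1..m}. \<Gamma>s j)"
  shows "contractible_space (geom_top (cone_ext \<Gamma> \<Gamma>s m))"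
proof -
  interpret covered_complex V1 \<Gamma> \<Gamma>s m
    using assms by unfold_locales auto
  show ?thesis
    by (rule contractible_space_cone_ext)
qed

end
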